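(* Assume the entropy variable map $\mathbf{u}\mapsto\mathbf{w}(\mathbf{u})$ is a $C^1$ diffeomorphism from $\mathcal{U}$ onto a convex set $\mathcal{W}$, with inverse $\mathbf{w}\mapsto\mathbf{u}(\mathbf{w})$, and that $\mathbf{A}$ and $\mathbf{H}$ are continuous. For $\mathbf{u}_L,\mathbf{u}_R\in\mathcal{U}$ let $\Phi(s):=\mathbf{w}_L+s[\![\mathbf{w}]\!]$, $s\in[0,1]$, be the linear path in entropy variables (corresponding to the path $s\mapsto\mathbf{u}(\Phi(s))$ in state space), and define $$\mathbf{D}^-(\mathbf{u}_L,\mathbf{u}_R)=\int_0^1(1-s)\,\mathbf{A}(\mathbf{u}(\Phi(s)))\,\mathbf{H}(\Phi(s))\,ds\;[\![\mathbf{w}]\!],\qquad \mathbf{D}^+(\mathbf{u}_L,\mathbf{u}_R)=\int_0^1 s\,\mathbf{A}(\mathbf{u}(\Phi(s)))\,\mathbf{H}(\Phi(s))\,ds\;[\![\mathbf{w}]\!].$$ Then $\mathbf{D}^\pm$ are entropy conservative fluctuations, i.e. they satisfy (C1)–(C5) with respect to the family of paths $\Phi(s;\mathbf{u}_L,\mathbf{u}_R)=\mathbf{u}(\mathbf{w}_L+s[\![\mathbf{w}]\!])$.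
   Context: System: $\mathbf{u}_t+\mathbf{f}(\mathbf{u})_x+\mathbf{B}(\mathbf{u})\mathbf{u}_x=0$, $\mathbf{u}\in\mathcal{U}\subset\mathbb{R}^n$, generalized Jacobian $\mathbf{A}:=\mathbf{f}_{\mathbf{u}}+\mathbf{B}$. Entropy pair: a strictly convex $C^2$ function $S$ and entropy flux $q$ with $q_{\mathbf{u}}=\mathbf{w}^T(\mathbf{f}_{\mathbf{u}}+\mathbf{B})$, where $\mathbf{w}(\mathbf{u}):=S_{\mathbf{u}}(\mathbf{u})$ are the entropy variables; $\mathbf{H}^{-1}(\mathbf{u}):=\mathbf{w}_{\mathbf{u}}=S_{\mathbf{u}\mathbf{u}}$ and $\mathbf{H}(\mathbf{w}):=\mathbf{u}_{\mathbf{w}}$ its inverse, viewed as a function of $\mathbf{w}$. Notation: $[\![\cdot]\!]=(\cdot)_R-(\cdot)_L$, $\mathbf{w}_L=\mathbf{w}(\mathbf{u}_L)$, $q_L=q(\mathbf{u}_L)$, etc. EC fluctuation conditions, for all $\mathbf{u},\mathbf{u}_L,\mathbf{u}_R$, with a given family of paths $\Phi(s;\mathbf{u}_L,\mathbf{u}_R)$: (C1) $\mathbf{D}^\pm(\mathbf{u},\mathbf{u})=0$; (C2) $\mathbf{D}^-(\mathbf{u}_L,\mathbf{u}_R)+\mathbf{D}^+(\mathbf{u}_L,\mathbf{u}_R)=\int_0^1\mathbf{A}(\Phi(s;\mathbf{u}_L,\mathbf{u}_R))\partial_s\Phi(s;\mathbf{u}_L,\mathbf{u}_R)\,ds$; (C3)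 $\mathbf{D}^-(\mathbf{u}_L,\mathbf{u}_R)+\mathbf{D}^+(\mathbf{u}_R,\mathbf{u}_L)=0$; (C4) $\mathbf{w}_L^T\mathbf{D}^-(\mathbf{u}_L,\mathbf{u}_R)+\mathbf{w}_R^T\mathbf{D}^+(\mathbf{u}_L,\mathbf{u}_R)=q_R-q_L$; (C5) $\frac{\partial\mathbf{D}^-(\mathbf{u}_L,\mathbf{u}_R)}{\partial\mathbf{u}_R}\big|_{\mathbf{u}_R=\mathbf{u}_L}=\frac12\mathbf{A}(\mathbf{u}_L)$. *)

theory Defs
  imports "HOL-Analysis.Analysis"
begin

definition strictly_convex_on :: "('a::real_vector) set \<Rightarrow> ('a \<Rightarrow> real) \<Rightarrow> bool" where
  "strictly_convex_on U S \<longleftrightarrow>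
     (\<forall>x\<in>U. \<forall>y\<in>U. x \<noteq> y \<longrightarrow> closed_segment x y \<subseteq> U \<longrightarrow>
        (\<forall>t::real. 0 < t \<and> t < 1 \<longrightarrow>
           S ((1 - t) *\<^sub>R x + t *\<^sub>R y) < (1 - t) * S x + t * S y))"

definition wpath :: "('a::real_vector \<Rightarrow> 'b::real_vector) \<Rightarrow> 'a \<Rightarrow> 'a \<Rightarrow> real \<Rightarrow> 'b" where
  "wpath w uL uR s = w uL + s *\<^sub>R (w uR - w uL)"

definition Dminus ::
  "(real^'n \<Rightarrow> real^'n^'n) \<Rightarrow> (real^'n \<Rightarrow> real^'n^'n) \<Rightarrow> (real^'n \<Rightarrow> real^'n)
   \<Rightarrow> (real^'n \<Rightarrow> real^'n) \<Rightarrow> real^'n \<Rightarrow> real^'n \<Rightarrow> real^'n" where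
  "Dminus A H uofw w uL uR =
     integral {0..1} (\<lambda>s. (1 - s) *\<^sub>R (A (uofw (wpath w uL uR s)) ** H (wpath w uL uR s)))
       *v (w uR - w uL)"

definition Dplus ::
  "(real^'n \<Rightarrow> real^'n^'n) \<Rightarrow> (real^'n \<Rightarrow> real^'n^'n) \<Rightarrow> (real^'n \<Rightarrow> real^'n)
   \<Rightarrow> (real^'n \<Rightarrow> real^'n) \<Rightarrow> real^'n \<Rightarrow> real^'n \<Rightarrow> real^'n" where
  "Dplus A H uofw w uL uR =
     integral {0..1} (\<lambda>s. s *\<^sub>R (A (uofw (wpath w uL uR s)) ** H (wpath w uL uR s)))
       *v (w uR - w uL)"

definition upath :: "(real^'n \<Rightarrow> real^'n) \<Rightarrow> (real^'n \<Rightarrow> real^'n) \<Rightarrow> real^'n \<Rightarrow> real^'n \<Rightarrow> real \<Rightarrow> real^'n" where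
  "upath uofw w uL uR s = uofw (wpath w uL uR s)"

end

theory Submission
  imports Defs
begin

(* Along the linear path \<Phi>(s) = w_L + s[[w]] in entropy variables the chain rule gives
  d/ds u(\<Phi>(s)) = H(\<Phi>(s)) [[w]], so A(u(\<Phi>)) H(\<Phi>) [[w]] is the integrand of the path
  integral in (C2); splitting the weight 1 = (1 - s) + s gives (C2), and reversing the path
  (s \<mapsto> 1 - s) swaps the two weights, which is (C3). Pairing D^- with w_L and D^+ with w_R
  recombines the weights into \<Phi>(s)^T A H [[w]] = d/ds q(u(\<Phi>(s))), which integrates to
  q_R - q_L (C4). For (C5), D^-(u_L, .) is a matrix function continuous at u_L applied to
  w(u_R) - w_L, which vanishes at u_L; so its derivative there is
  (\<integral> (1 - s) ds) A(u_L) H(w_L) w_u(u_L) = A(u_L)/2, as H(w(u)) inverts w_u(u). *)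

lemma bounded_bilinear_matrix_matrix_mult:
  "bounded_bilinear ((**) :: real^'n^'m \<Rightarrow> real^'k^'n \<Rightarrow> real^'k^'m)"
  unfolding bilinear_conv_bounded_bilinear[symmetric] bilinear_def
  by (auto simp: linear_iff matrix_add_ldistrib matrix_scalar_ac scalar_matrix_assoc[symmetric])
     (simp add: matrix_matrix_mult_def vec_eq_iff sum.distrib algebra_simps)

lemma bounded_bilinear_matrix_vector_mult:
  "bounded_bilinear ((*v) :: real^'n^'m \<Rightarrow> real^'n \<Rightarrow> real^'m)"
  unfolding bilinear_conv_bounded_bilinear[symmetric] bilinear_def
  by (auto simp: linear_iff matrix_vector_right_distrib matrix_vector_mult_add_rdistrib
      matrix_vector_mult_scaleR scaleR_matrix_vector_assoc)

lemma integral_matrix_vector_mult: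
  fixes f :: "'a::euclidean_space \<Rightarrow> real^'n^'m"
  assumes "f integrable_on S"
  shows "integral S f *v x = integral S (\<lambda>s. f s *v x)"
  using integral_linear[OF assms bounded_bilinear.bounded_linear_left[OF bounded_bilinear_matrix_vector_mult]]
  by (simp add: o_def)

lemma integral_reflect_unit_interval:
  fixes g :: "real \<Rightarrow> 'a::euclidean_space"
  assumes "g integrable_on {0..1}"
  shows "integral {0..1} (\<lambda>s. g (1 - s)) = integral {0..1} g"
proof -
  from assms obtain i where i: "(g has_integral i) (cbox 0 1)"
    by (auto simp: integrable_on_def)
  have "(\<lambda>x::real. - x + 1) ` cbox 0 1 = {0..1}"
    by (auto simp: image_iff intro!: bexI[where x="1 - _"])
  with has_integral_affinity[OF i, of "-1" 1] i show ?thesis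
    by (simp add: integral_unique)
qed

lemma has_integral_one_minus_unit_interval: "((\<lambda>s::real. 1 - s) has_integral 1/2) {0..1}"
proof -
  have "((\<lambda>s::real. 1 - s) has_integral ((\<lambda>s. s - s^2/2) 1 - (\<lambda>s. s - s^2/2) 0)) {0..1}"
    by (rule fundamental_theorem_of_calculus)
       (auto simp: has_real_derivative_iff_has_vector_derivative[symmetric] intro!: derivative_eq_intros)
  then show ?thesis by simp
qed

lemma (in bounded_bilinear) has_derivative_vanishing_right:
  assumes M: "isCont M x" and \<delta>: "(\<delta> has_derivative \<delta>') (at x)" and \<delta>_x: "\<delta> x = 0"
  shows "((\<lambda>y. prod (M y) (\<delta> y)) has_derivative (\<lambda>h. prod (M x) (\<delta>' h))) (at x)"
proof -
  have lin: "bounded_linear \<delta>'"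
    using \<delta> by (rule has_derivative_bounded_linear)
  (* The difference quotient splits as prod (M y) (r y) + prod (M y - M x) (\<delta>' (y - x) / |y - x|):
     r tends to 0, and the second term is a null function times a bounded one. *)
  define r where "r y = (\<delta> y - \<delta>' (y - x)) /\<^sub>R norm (y - x)" for y
  have r: "(r \<longlongrightarrow> 0) (at x)"
    using \<delta> \<delta>_x unfolding r_def[abs_def] by (simp add: has_derivative_at_within)
  have "((\<lambda>y. prod (M y) (r y)) \<longlongrightarrow> 0) (at x)"
    using tendsto[OF M[unfolded isCont_def] r] by (simp add: zero_right)
  moreover have "((\<lambda>y. prod (M y - M x) (\<delta>' (y - x) /\<^sub>R norm (y - x))) \<longlongrightarrow> 0) (at x)"
  proof -
    obtain K where "K > 0" and K: "\<And>h. norm (\<delta>' h) \<le> norm h * K"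
      using bounded_linear.pos_bounded[OF lin] by blast
    have "norm (\<delta>' h /\<^sub>R norm h) \<le> K" for h
      using K[of h] \<open>K > 0\<close> by (cases "h = 0") (auto simp: field_simps)
    then have "Bfun (\<lambda>y. \<delta>' (y - x) /\<^sub>R norm (y - x)) (at x)"
      by (intro BfunI always_eventually allI)
    moreover have "Zfun (\<lambda>y. M y - M x) (at x)"
      using M by (simp add: isCont_def tendsto_Zfun_iff)
    ultimately show ?thesis
      by (simp add: Zfun_prod_Bfun tendsto_Zfun_iff)
  qed
  ultimately have "((\<lambda>y. prod (M y) (r y) + prod (M y - M x) (\<delta>' (y - x) /\<^sub>R norm (y - x))) \<longlongrightarrow> 0) (at x)"
    by (rule tendsto_add_zero)
  moreover have "prod (M y) (r y) + prod (M y - M x) (\<delta>' (y - x) /\<^sub>R norm (y - x))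
      = ((prod (M y) (\<delta> y) - prod (M x) (\<delta> x)) - prod (M x) (\<delta>' (y - x))) /\<^sub>R norm (y - x)" for y
    by (simp add: r_def \<delta>_x scaleR_right diff_left diff_right zero_right algebra_simps)
  ultimately show ?thesis
    by (intro has_derivativeI bounded_linear_compose[OF bounded_linear_right lin]) simp
qed

lemma wpath_swap: "wpath w uR uL s = wpath w uL uR (1 - s)"
  by (simp add: wpath_def algebra_simps)

lemma Dminus_same: "Dminus A H uofw w u u = 0"
  by (simp add: Dminus_def)

lemma Dplus_same: "Dplus A H uofw w u u = 0"
  by (simp add: Dplus_def)

locale entropy_variables =
  fixes U W :: "(real^'n) set"
    and w uofw :: "real^'n \<Rightarrow> real^'n"
    and A H :: "real^'n \<Rightarrow> real^'n^'n"
  assumes W_convex: "convex W"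
    and w_into: "w ` U \<subseteq> W"
    and uofw_into: "uofw ` W \<subseteq> U"
    and uofw_w: "\<And>u. u \<in> U \<Longrightarrow> uofw (w u) = u"
    and w_uofw: "\<And>v. v \<in> W \<Longrightarrow> w (uofw v) = v"
    and uofw_deriv: "\<And>v. v \<in> W \<Longrightarrow> (uofw has_derivative (\<lambda>h. H v *v h)) (at v within W)"
    and H_cont: "continuous_on W H"
    and A_cont: "continuous_on U A"
begin

definition AH :: "real^'n \<Rightarrow> real^'n^'n" where
  "AH v = A (uofw v) ** H v"

definition path_integrand :: "real^'n \<Rightarrow> real^'n \<Rightarrow> real \<Rightarrow> real^'n" where
  "path_integrand uL uR s = AH (wpath w uL uR s) *v (w uR - w uL)"

lemma wpath_in_W:
  assumes "uL \<in> U" "uR \<in> U" "s \<in> {0..1}"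
  shows "wpath w uL uR s \<in> W"
proof -
  have "wpath w uL uR s = (1 - s) *\<^sub>R w uL + s *\<^sub>R w uR"
    by (simp add: wpath_def algebra_simps)
  then show ?thesis
    using convexD[OF W_convex, of "w uL" "w uR" "1 - s" s] w_into assms by auto
qed

lemma wpath_image_subset:
  assumes "uL \<in> U" "uR \<in> U"
  shows "wpath w uL uR ` {0..1} \<subseteq> W"
  using wpath_in_W[OF assms] by blast

lemma continuous_on_AH: "continuous_on W AH"
proof -
  have "continuous_on W uofw"
    using uofw_deriv has_derivative_continuous continuous_on_eq_continuous_within by blast
  then have "continuous_on W (\<lambda>v. A (uofw v))"
    using continuous_on_compose2[OF A_cont] uofw_into by blast
  then show ?thesis
    unfolding AH_def
    by (rule bounded_bilinear.continuous_on[OF bounded_bilinear_matrix_matrix_mult _ H_cont])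
qed

lemma continuous_on_AH_wpath:
  assumes "uL \<in> U" "uR \<in> U"
  shows "continuous_on {0..1} (\<lambda>s. AH (wpath w uL uR s))"
proof (rule continuous_on_compose2[OF continuous_on_AH _ wpath_image_subset[OF assms]])
  show "continuous_on {0..1} (wpath w uL uR)"
    unfolding wpath_def by (intro continuous_intros)
qed

lemma integrable_weighted_AH_wpath:
  assumes "uL \<in> U" "uR \<in> U" "continuous_on {0..1} c"
  shows "(\<lambda>s. c s *\<^sub>R AH (wpath w uL uR s)) integrable_on {0..1}"
  by (intro integrable_continuous_interval continuous_intros continuous_on_AH_wpath assms)

lemma integrable_weighted_path_integrand:
  assumes "uL \<in> U" "uR \<in> U" "continuous_on {0..1} c"
  shows "(\<lambda>s. c s *\<^sub>R path_integrand uL uR s) integrable_on {0..1}"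
  unfolding path_integrand_def
  by (intro integrable_continuous_interval continuous_intros assms
      bounded_bilinear.continuous_on[OF bounded_bilinear_matrix_vector_mult] continuous_on_AH_wpath)

lemma Dminus_eq: "Dminus A H uofw w uL uR = integral {0..1} (\<lambda>s. (1 - s) *\<^sub>R AH (wpath w uL uR s)) *v (w uR - w uL)"
  by (simp add: Dminus_def AH_def)

lemma Dplus_eq: "Dplus A H uofw w uL uR = integral {0..1} (\<lambda>s. s *\<^sub>R AH (wpath w uL uR s)) *v (w uR - w uL)"
  by (simp add: Dplus_def AH_def)

lemma Dminus_eq_integral:
  assumes "uL \<in> U" "uR \<in> U"
  shows "Dminus A H uofw w uL uR = integral {0..1} (\<lambda>s. (1 - s) *\<^sub>R path_integrand uL uR s)"
  unfolding Dminus_eq path_integrand_def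
  by (subst integral_matrix_vector_mult)
     (auto simp: scaleR_matrix_vector_assoc intro!: integrable_weighted_AH_wpath assms continuous_intros)

lemma Dplus_eq_integral:
  assumes "uL \<in> U" "uR \<in> U"
  shows "Dplus A H uofw w uL uR = integral {0..1} (\<lambda>s. s *\<^sub>R path_integrand uL uR s)"
  unfolding Dplus_eq path_integrand_def
  by (subst integral_matrix_vector_mult)
     (auto simp: scaleR_matrix_vector_assoc intro!: integrable_weighted_AH_wpath assms continuous_intros)

lemma has_vector_derivative_upath:
  assumes "uL \<in> U" "uR \<in> U" "s \<in> {0..1}"
  shows "(upath uofw w uL uR has_vector_derivative H (wpath w uL uR s) *v (w uR - w uL))
           (at s within {0..1})"
proof -
  have "(wpath w uL uR has_derivative (\<lambda>t. t *\<^sub>R (w uR - w uL))) (at s within {0..1})"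
    unfolding wpath_def[abs_def] by (auto intro!: derivative_eq_intros)
  from has_derivative_in_compose2[where t=W and g'="\<lambda>v h. H v *v h",
      OF uofw_deriv wpath_image_subset[OF assms(1,2)] assms(3) this]
  have "((\<lambda>t. uofw (wpath w uL uR t)) has_derivative
      (\<lambda>t. H (wpath w uL uR s) *v (t *\<^sub>R (w uR - w uL)))) (at s within {0..1})" .
  then show ?thesis
    by (simp add: has_vector_derivative_def upath_def[abs_def] matrix_vector_mult_scaleR)
qed

lemma path_integrand_eq:
  assumes "uL \<in> U" "uR \<in> U" "s \<in> {0..1}"
  shows "path_integrand uL uR s
    = A (upath uofw w uL uR s) *v vector_derivative (upath uofw w uL uR) (at s within {0..1})"
  using vector_derivative_within_closed_interval[OF _ assms(3) has_vector_derivative_upath[OF assms]]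
  by (simp add: path_integrand_def AH_def upath_def matrix_vector_mul_assoc)

lemma Dminus_plus_Dplus:
  assumes "uL \<in> U" "uR \<in> U"
  shows "Dminus A H uofw w uL uR + Dplus A H uofw w uL uR
    = integral {0..1} (\<lambda>s. A (upath uofw w uL uR s) *v
                             vector_derivative (upath uofw w uL uR) (at s within {0..1}))"
proof -
  have "Dminus A H uofw w uL uR + Dplus A H uofw w uL uR
      = integral {0..1} (\<lambda>s. (1 - s) *\<^sub>R path_integrand uL uR s + s *\<^sub>R path_integrand uL uR s)"
    unfolding Dminus_eq_integral[OF assms] Dplus_eq_integral[OF assms]
    by (rule integral_add[symmetric]) (auto intro!: integrable_weighted_path_integrand assms continuous_intros)
  also have "\<dots> = integral {0..1} (path_integrand uL uR)"
    by (simp add: scaleR_left_diff_distrib)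
  also have "\<dots> = integral {0..1} (\<lambda>s. A (upath uofw w uL uR s) *v
                                         vector_derivative (upath uofw w uL uR) (at s within {0..1}))"
    by (rule integral_cong) (rule path_integrand_eq[OF assms])
  finally show ?thesis .
qed

lemma Dminus_plus_Dplus_swap:
  assumes "uL \<in> U" "uR \<in> U"
  shows "Dminus A H uofw w uL uR + Dplus A H uofw w uR uL = 0"
proof -
  have "(\<lambda>s. (1 - s) *\<^sub>R AH (wpath w uL uR s)) integrable_on {0..1}"
    by (rule integrable_weighted_AH_wpath[OF assms]) (intro continuous_intros)
  from integral_reflect_unit_interval[OF this]
  have "integral {0..1} (\<lambda>s. s *\<^sub>R AH (wpath w uR uL s))
      = integral {0..1} (\<lambda>s. (1 - s) *\<^sub>R AH (wpath w uL uR s))"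
    by (simp add: wpath_swap[of w uR uL])
  then show ?thesis
    by (simp add: Dminus_eq Dplus_eq matrix_vector_mult_diff_distrib)
qed

lemma entropy_conservation:
  fixes q :: "real^'n \<Rightarrow> real"
  assumes q_deriv: "\<And>u. u \<in> U \<Longrightarrow> (q has_derivative (\<lambda>h. w u \<bullet> (A u *v h))) (at u)"
    and L: "uL \<in> U" and R: "uR \<in> U"
  shows "w uL \<bullet> Dminus A H uofw w uL uR + w uR \<bullet> Dplus A H uofw w uL uR = q uR - q uL"
proof -
  let ?g = "path_integrand uL uR"
  have int_minus: "(\<lambda>s. (1 - s) *\<^sub>R ?g s) integrable_on {0..1}"
    and int_plus: "(\<lambda>s. s *\<^sub>R ?g s) integrable_on {0..1}"
    by (rule integrable_weighted_path_integrand[OF L R], intro continuous_intros)+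
  have "w uL \<bullet> Dminus A H uofw w uL uR + w uR \<bullet> Dplus A H uofw w uL uR
      = integral {0..1} (\<lambda>s. (1 - s) *\<^sub>R ?g s \<bullet> w uL) + integral {0..1} (\<lambda>s. s *\<^sub>R ?g s \<bullet> w uR)"
    unfolding Dminus_eq_integral[OF L R] Dplus_eq_integral[OF L R]
    by (simp only: integral_component_eq[OF int_minus] integral_component_eq[OF int_plus]
        inner_commute[of "w uL"] inner_commute[of "w uR"])
  also have "\<dots> = integral {0..1} (\<lambda>s. (1 - s) *\<^sub>R ?g s \<bullet> w uL + s *\<^sub>R ?g s \<bullet> w uR)"
    using integral_add[OF integrable_linear[OF int_minus bounded_linear_inner_left]
        integrable_linear[OF int_plus bounded_linear_inner_left]]
    by (simp add: o_def)
  also have "\<dots> = integral {0..1} (\<lambda>s. ?g s \<bullet> wpath w uL uR s)"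
    by (rule integral_cong) (simp add: wpath_def inner_simps algebra_simps)
  also have "\<dots> = q (upath uofw w uL uR 1) - q (upath uofw w uL uR 0)"
  proof (rule integral_unique, rule fundamental_theorem_of_calculus)
    fix s :: real assume s: "s \<in> {0..1}"
    let ?u = "upath uofw w uL uR s"
    have u: "?u \<in> U" and wu: "w ?u = wpath w uL uR s"
      using uofw_into w_uofw wpath_in_W[OF L R s] by (auto simp: upath_def)
    have "((\<lambda>t. q (upath uofw w uL uR t)) has_derivative
        (\<lambda>t. w ?u \<bullet> (A ?u *v (t *\<^sub>R (H (wpath w uL uR s) *v (w uR - w uL)))))) (at s within {0..1})"
      using has_derivative_compose[OF has_vector_derivative_upath[OF L R s, unfolded has_vector_derivative_def]
          q_deriv[OF u]] .
    then show "((\<lambda>t. q (upath uofw w uL uR t)) has_vector_derivative (?g s \<bullet> wpath w uL uR s))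
        (at s within {0..1})"
      unfolding has_vector_derivative_def wu
      by (simp add: path_integrand_def AH_def upath_def matrix_vector_mult_scaleR matrix_vector_mul_assoc
          inner_commute)
  qed simp
  also have "\<dots> = q uR - q uL"
    by (simp add: upath_def wpath_def uofw_w L R)
  finally show ?thesis .
qed

lemma H_w_Hinv_cancel:
  assumes "open U" "u \<in> U" "(w has_derivative (\<lambda>h. Hinv *v h)) (at u)"
  shows "H (w u) *v (Hinv *v h) = h"
proof -
  have "((\<lambda>x. uofw (w x)) has_derivative (\<lambda>h. H (w u) *v (Hinv *v h))) (at u within U)"
    by (rule has_derivative_in_compose2[where t=W and g'="\<lambda>v h. H v *v h", OF uofw_deriv w_into assms(2)])
       (use assms(3) has_derivative_at_withinI in auto)
  then have "((\<lambda>x. uofw (w x)) has_derivative (\<lambda>h. H (w u) *v (Hinv *v h))) (at u)"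
    using at_within_open[OF assms(2,1)] by simp
  moreover have "((\<lambda>x. uofw (w x)) has_derivative (\<lambda>h. h)) (at u)"
    by (rule has_derivative_transform_within_open[OF has_derivative_ident assms(1,2)]) (simp add: uofw_w)
  ultimately show ?thesis
    using has_derivative_unique by metis
qed

lemma continuous_on_weighted_integral_AH_wpath:
  assumes w_cont: "continuous_on U w" and c: "continuous_on {0..1} c" and L: "uL \<in> U"
  shows "continuous_on U (\<lambda>uR. integral {0..1} (\<lambda>s. c s *\<^sub>R AH (wpath w uL uR s)))"
proof -
  have "continuous_on (U \<times> {0..1}) (\<lambda>p. w (fst p))"
    by (rule continuous_on_compose2[OF w_cont continuous_on_fst]) auto
  then have "continuous_on (U \<times> {0..1}) (\<lambda>p. wpath w uL (fst p) (snd p))"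
    unfolding wpath_def by (intro continuous_intros)
  then have "continuous_on (U \<times> {0..1}) (\<lambda>p. AH (wpath w uL (fst p) (snd p)))"
    by (rule continuous_on_compose2[OF continuous_on_AH]) (auto intro: wpath_in_W L)
  moreover have "continuous_on (U \<times> {0..1}) (\<lambda>p. c (snd p))"
    by (rule continuous_on_compose2[OF c continuous_on_snd]) auto
  ultimately have "continuous_on (U \<times> cbox 0 1) (\<lambda>(uR, s). c s *\<^sub>R AH (wpath w uL uR s))"
    unfolding case_prod_beta cbox_interval by (intro continuous_intros)
  from integral_continuous_on_param[OF this] show ?thesis
    by (simp add: cbox_interval)
qed

lemma Dminus_has_derivative:
  assumes U_open: "open U"
    and w_deriv: "\<And>u. u \<in> U \<Longrightarrow> (w has_derivative (\<lambda>h. Hinv u *v h)) (at u)"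
    and L: "uL \<in> U"
  shows "((\<lambda>uR. Dminus A H uofw w uL uR) has_derivative (\<lambda>h. ((1/2::real) *\<^sub>R A uL) *v h)) (at uL)"
proof -
  define M where "M uR = integral {0..1} (\<lambda>s. (1 - s) *\<^sub>R AH (wpath w uL uR s))" for uR
  have "continuous_on U w"
    using w_deriv has_derivative_continuous continuous_at_imp_continuous_on by blast
  then have "continuous_on U M"
    unfolding M_def by (rule continuous_on_weighted_integral_AH_wpath[OF _ _ L]) (intro continuous_intros)
  then have "isCont M uL"
    using U_open L continuous_on_eq_continuous_at by blast
  moreover have "((\<lambda>uR. w uR - w uL) has_derivative (\<lambda>h. Hinv uL *v h)) (at uL)"
    using w_deriv[OF L] by (auto intro!: derivative_eq_intros)
  ultimately have "((\<lambda>uR. M uR *v (w uR - w uL)) has_derivative (\<lambda>h. M uL *v (Hinv uL *v h))) (at uL)"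
    by (intro bounded_bilinear.has_derivative_vanishing_right[OF bounded_bilinear_matrix_vector_mult]) simp_all
  moreover have "M uL *v (Hinv uL *v h) = ((1/2::real) *\<^sub>R A uL) *v h" for h
  proof -
    have "M uL = integral {0..1} (\<lambda>s. (1 - s) *\<^sub>R AH (w uL))"
      by (simp add: M_def wpath_def)
    also have "\<dots> = (1/2::real) *\<^sub>R AH (w uL)"
      by (rule integral_unique[OF has_integral_scaleR_left[OF has_integral_one_minus_unit_interval]])
    finally have "M uL = (1/2::real) *\<^sub>R AH (w uL)" .
    then show ?thesis
      using H_w_Hinv_cancel[OF U_open L w_deriv[OF L]]
      by (simp add: AH_def uofw_w L matrix_vector_mul_assoc[symmetric] scaleR_matrix_vector_assoc[symmetric])
  qed
  ultimately show ?thesis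
    by (simp add: Dminus_eq M_def)
qed

end

theorem theorem2:
  fixes U W :: "(real^'n) set"
    and f :: "real^'n \<Rightarrow> real^'n"
    and Df :: "real^'n \<Rightarrow> real^'n^'n"
    and B :: "real^'n \<Rightarrow> real^'n^'n"
    and S q :: "real^'n \<Rightarrow> real"
    and w :: "real^'n \<Rightarrow> real^'n"
    and Hinv :: "real^'n \<Rightarrow> real^'n^'n"
    and uofw :: "real^'n \<Rightarrow> real^'n"
    and H :: "real^'n \<Rightarrow> real^'n^'n"
    and A :: "real^'n \<Rightarrow> real^'n^'n"
  assumes U_open: "open U"
    (* flux Jacobian f_u and generalized Jacobian A = f_u + B *)
    and f_deriv: "\<And>u. u \<in> U \<Longrightarrow> (f has_derivative (\<lambda>h. Df u *v h)) (at u)"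
    and A_def: "\<And>u. u \<in> U \<Longrightarrow> A u = Df u + B u"
    and A_cont: "continuous_on U A"
    (* entropy S: strictly convex, C^2, with gradient w = S_u and Hessian Hinv = w_u = S_uu *)
    and S_strict: "strictly_convex_on U S"
    and S_deriv: "\<And>u. u \<in> U \<Longrightarrow> (S has_derivative (\<lambda>h. w u \<bullet> h)) (at u)"
    and w_deriv: "\<And>u. u \<in> U \<Longrightarrow> (w has_derivative (\<lambda>h. Hinv u *v h)) (at u)"
    and Hinv_cont: "continuous_on U Hinv"
    (* entropy flux q with q_u = w^T (f_u + B) *)
    and q_deriv: "\<And>u. u \<in> U \<Longrightarrow> (q has_derivative (\<lambda>h. w u \<bullet> (A u *v h))) (at u)"
    (* u \<mapsto> w(u) is a C^1 diffeomorphism of U onto the convex set W with inverse uofw *)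
    and W_convex: "convex W"
    and w_onto: "w ` U = W"
    and uofw_onto: "uofw ` W = U"
    and uofw_w: "\<And>u. u \<in> U \<Longrightarrow> uofw (w u) = u"
    and w_uofw: "\<And>v. v \<in> W \<Longrightarrow> w (uofw v) = v"
    and uofw_deriv: "\<And>v. v \<in> W \<Longrightarrow> (uofw has_derivative (\<lambda>h. H v *v h)) (at v within W)"
    and H_cont: "continuous_on W H"
  shows
    "(\<forall>u\<in>U. Dminus A H uofw w u u = 0 \<and> Dplus A H uofw w u u = 0)
   \<and> (\<forall>uL\<in>U. \<forall>uR\<in>U.
        Dminus A H uofw w uL uR + Dplus A H uofw w uL uR =
        integral {0..1} (\<lambda>s. A (upath uofw w uL uR s) *v
                           vector_derivative (upath uofw w uL uR) (at s within {0..1})))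
   \<and> (\<forall>uL\<in>U. \<forall>uR\<in>U. Dminus A H uofw w uL uR + Dplus A H uofw w uR uL = 0)
   \<and> (\<forall>uL\<in>U. \<forall>uR\<in>U.
        w uL \<bullet> Dminus A H uofw w uL uR + w uR \<bullet> Dplus A H uofw w uL uR = q uR - q uL)
   \<and> (\<forall>uL\<in>U. ((\<lambda>uR. Dminus A H uofw w uL uR) has_derivative
                 (\<lambda>h. ((1/2::real) *\<^sub>R A uL) *v h)) (at uL))"
proof -
  interpret entropy_variables U W w uofw A H
    by unfold_locales (simp_all add: W_convex w_onto uofw_onto uofw_w w_uofw uofw_deriv H_cont A_cont)
  show ?thesis
    using Dminus_plus_Dplus Dminus_plus_Dplus_swap entropy_conservation[OF q_deriv]
      Dminus_has_derivative[OF U_open w_deriv]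
    by (simp add: Dminus_same Dplus_same)
qed

end
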